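(* Let $(M,g)$ be a $4$-dimensional $pp$-wave which is not locally conformally flat, with local form $g=2\,du\,dv+H(u,x_1,x_2)\,du^2+dx_1^2+dx_2^2$ and degenerate parallel line field $\mathcal D=\operatorname{span}\{\partial_v\}$. If $(M,g,f,\mu)$ is quasi-Einstein for some smooth $f$ and some real constant $\mu$ (arbitrary), then $df(\mathcal D)=0$, i.e. $\partial_v f=0$.
   Context: The structure $(M,g,f,\mu)$, with $f$ a smooth function and $\mu$ a real constant, is called quasi-Einstein if there is a smooth function $\lambda$ with $\operatorname{Hes}_f+\rho-\mu\, df\otimes df=\lambda g$, where $\rho$ is the Ricci tensor and $\operatorname{Hes}_f=\nabla df$ is the Hessian. Locally conformally flat means the Weyl tensor vanishes identically; not locally conformally flat means it does not vanish identically. *)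

theory Defs
  imports "HOL-Analysis.Analysis"
begin

text \<open>Local coordinate calculus on an open set of R^4. Points are vectors p :: real^4,
  coordinate index type 4. Coordinate order: index 1 = u, 2 = v, 3 = x1, 4 = x2.\<close>

definition pd :: "4 \<Rightarrow> (real^4 \<Rightarrow> real) \<Rightarrow> real^4 \<Rightarrow> real" where
  "pd i F p = deriv (\<lambda>t. F (p + t *\<^sub>R axis i 1)) 0"

definition iter_pd :: "4 list \<Rightarrow> (real^4 \<Rightarrow> real) \<Rightarrow> real^4 \<Rightarrow> real" where
  "iter_pd is F = foldr pd is F"

definition smooth_on :: "(real^4) set \<Rightarrow> (real^4 \<Rightarrow> real) \<Rightarrow> bool" where
  "smooth_on U F \<longleftrightarrow>
     (\<forall>is. continuous_on U (iter_pd is F) \<and>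
        (\<forall>i. \<forall>p\<in>U. (\<lambda>t. iter_pd is F (p + t *\<^sub>R axis i 1)) differentiable (at 0)))"

type_synonym metric = "4 \<Rightarrow> 4 \<Rightarrow> real^4 \<Rightarrow> real"

definition ginv :: "metric \<Rightarrow> 4 \<Rightarrow> 4 \<Rightarrow> real^4 \<Rightarrow> real" where
  "ginv g k l p = matrix_inv (\<chi> i j. g i j p) $ k $ l"

definition chr :: "metric \<Rightarrow> 4 \<Rightarrow> 4 \<Rightarrow> 4 \<Rightarrow> real^4 \<Rightarrow> real" where
  "chr g k i j p = (1/2) * (\<Sum>l\<in>UNIV. ginv g k l p *
      (pd i (g j l) p + pd j (g i l) p - pd l (g i j) p))"

text \<open>R^l_{ijk}: components of R(d_i,d_j)d_k = nabla_i nabla_j d_k - nabla_j nabla_i d_k.\<close>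
definition riem :: "metric \<Rightarrow> 4 \<Rightarrow> 4 \<Rightarrow> 4 \<Rightarrow> 4 \<Rightarrow> real^4 \<Rightarrow> real" where
  "riem g l i j k p = pd i (chr g l j k) p - pd j (chr g l i k) p
     + (\<Sum>m\<in>UNIV. chr g m j k p * chr g l i m p - chr g m i k p * chr g l j m p)"

definition rm :: "metric \<Rightarrow> 4 \<Rightarrow> 4 \<Rightarrow> 4 \<Rightarrow> 4 \<Rightarrow> real^4 \<Rightarrow> real" where
  "rm g i j k l p = (\<Sum>m\<in>UNIV. g l m p * riem g m i j k p)"

definition ricci :: "metric \<Rightarrow> 4 \<Rightarrow> 4 \<Rightarrow> real^4 \<Rightarrow> real" where
  "ricci g j k p = (\<Sum>i\<in>UNIV. riem g i i j k p)"

definition scal :: "metric \<Rightarrow> real^4 \<Rightarrow> real" where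
  "scal g p = (\<Sum>j\<in>UNIV. \<Sum>k\<in>UNIV. ginv g j k p * ricci g j k p)"

text \<open>Weyl tensor in dimension n = 4.\<close>
definition weyl :: "metric \<Rightarrow> 4 \<Rightarrow> 4 \<Rightarrow> 4 \<Rightarrow> 4 \<Rightarrow> real^4 \<Rightarrow> real" where
  "weyl g i j k l p = rm g i j k l p
     - (1/2) * (ricci g j k p * g i l p + ricci g i l p * g j k p
                - ricci g i k p * g j l p - ricci g j l p * g i k p)
     + (scal g p / 6) * (g j k p * g i l p - g i k p * g j l p)"

definition hes :: "metric \<Rightarrow> (real^4 \<Rightarrow> real) \<Rightarrow> 4 \<Rightarrow> 4 \<Rightarrow> real^4 \<Rightarrow> real" where
  "hes g f i j p = pd i (pd j f) p - (\<Sum>k\<in>UNIV. chr g k i j p * pd k f p)"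

definition quasi_einstein :: "(real^4) set \<Rightarrow> metric \<Rightarrow> (real^4 \<Rightarrow> real) \<Rightarrow> real \<Rightarrow> bool" where
  "quasi_einstein U g f \<mu> \<longleftrightarrow>
     (\<exists>lam. smooth_on U lam \<and>
        (\<forall>p\<in>U. \<forall>i j. hes g f i j p + ricci g i j p - \<mu> * pd i f p * pd j f p = lam p * g i j p))"

definition ppwave :: "(real \<Rightarrow> real \<Rightarrow> real \<Rightarrow> real) \<Rightarrow> metric" where
  "ppwave H i j p =
     (if i = 1 \<and> j = 1 then H (p$1) (p$3) (p$4)
      else if (i = 1 \<and> j = 2) \<or> (i = 2 \<and> j = 1) \<or> (i = 3 \<and> j = 3) \<or> (i = 4 \<and> j = 4) then 1
      else 0)"

end

theory Submission
  imports Defs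
begin

text \<open>Put \<open>\<psi> = e\<^sup>-\<^sup>\<mu>\<^sup>f \<partial>\<^sub>v f\<close>. The components of the quasi-Einstein equation of a pp-wave other than
  the \<open>uu\<close> one say that \<open>\<psi>\<close> depends on \<open>u\<close> alone, with \<open>\<partial>\<^sub>u \<psi> = L = e\<^sup>-\<^sup>\<mu>\<^sup>f \<lambda>\<close>; comparing
  mixed third derivatives of \<open>e\<^sup>-\<^sup>\<mu>\<^sup>f \<partial>\<^sub>x\<^sub>a f\<close> then gives
  \<open>\<partial>\<^sub>u L = H\<^sub>1\<^sub>1 \<psi>/2 = H\<^sub>2\<^sub>2 \<psi>/2\<close> and \<open>H\<^sub>1\<^sub>2 \<psi> = 0\<close>, where \<open>H\<^sub>a\<^sub>b\<close> is the transversal Hessian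
  of \<open>H\<close>. The Weyl tensor vanishes wherever \<open>H\<^sub>1\<^sub>1 = H\<^sub>2\<^sub>2\<close> and \<open>H\<^sub>1\<^sub>2 = 0\<close>, so \<open>\<psi>\<close> vanishes on a
  nonempty open set. Along each \<open>u\<close>-line \<open>\<psi>\<close> solves the linear equation \<open>\<psi>'' = H\<^sub>1\<^sub>1 \<psi>/2\<close>, so by
  uniqueness for this ODE the interior of its zero set is closed in the connected domain.\<close>

definition has_pd :: "4 \<Rightarrow> (real^4 \<Rightarrow> real) \<Rightarrow> real^4 \<Rightarrow> real \<Rightarrow> bool" where
  "has_pd i F p D \<longleftrightarrow> ((\<lambda>t. F (p + t *\<^sub>R axis i 1)) has_real_derivative D) (at 0)"

lemma has_pd_imp_pd: "has_pd i F p D \<Longrightarrow> pd i F p = D"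
  unfolding has_pd_def pd_def by (rule DERIV_imp_deriv)

lemma has_pd_pd: "(\<lambda>t. F (p + t *\<^sub>R axis i 1)) differentiable (at 0) \<Longrightarrow> has_pd i F p (pd i F p)"
  unfolding has_pd_def pd_def by (simp add: DERIV_deriv_iff_real_differentiable)

lemma has_pd_imp_differentiable: "has_pd i F p D \<Longrightarrow> (\<lambda>t. F (p + t *\<^sub>R axis i 1)) differentiable (at 0)"
  unfolding has_pd_def using real_differentiable_def by blast

lemma has_pd_along_line:
  assumes "has_pd i F (p + s *\<^sub>R axis i 1) D"
  shows "((\<lambda>t. F (p + t *\<^sub>R axis i 1)) has_real_derivative D) (at s)"
proof -
  have "((\<lambda>t. F (p + (t + s) *\<^sub>R axis i 1)) has_real_derivative D) (at 0)"
    using assms unfolding has_pd_def by (simp add: algebra_simps)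
  then show ?thesis using DERIV_shift[of "\<lambda>t. F (p + t *\<^sub>R axis i 1)" D 0 s] by simp
qed

lemma has_pd_cong:
  assumes "open U" "p \<in> U" "\<And>q. q \<in> U \<Longrightarrow> F q = G q" "has_pd i F p D"
  shows "has_pd i G p D"
  unfolding has_pd_def
proof (rule has_field_derivative_transform_within_open[where S = "{t. p + t *\<^sub>R axis i 1 \<in> U}"])
  have "continuous_on UNIV (\<lambda>t::real. p + t *\<^sub>R axis i 1)" by (intro continuous_intros)
  then show "open {t. p + t *\<^sub>R axis i 1 \<in> U}"
    using open_vimage[OF \<open>open U\<close>] by (simp add: vimage_def)
  show "((\<lambda>t. F (p + t *\<^sub>R axis i 1)) has_real_derivative D) (at 0)"
    using assms(4) unfolding has_pd_def .
qed (use assms in auto)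

lemma pd_cong:
  assumes "open U" "p \<in> U" "\<And>q. q \<in> U \<Longrightarrow> F q = G q"
  shows "pd i F p = pd i G p"
proof -
  have "has_pd i F p D \<longleftrightarrow> has_pd i G p D" for D
    using has_pd_cong[OF assms(1,2)] assms(3) by metis
  then show ?thesis unfolding pd_def deriv_def has_pd_def[symmetric] by simp
qed

lemma pd_const: "pd i (\<lambda>p. c) p = 0"
  unfolding pd_def by simp

lemma smooth_on_pd: "smooth_on U F \<Longrightarrow> smooth_on U (pd i F)"
proof -
  have "iter_pd is (pd i F) = iter_pd (is @ [i]) F" for "is"
    by (simp add: iter_pd_def)
  then show "smooth_on U F \<Longrightarrow> smooth_on U (pd i F)"
    unfolding smooth_on_def by presburger
qed

lemma smooth_on_has_pd: "smooth_on U F \<Longrightarrow> p \<in> U \<Longrightarrow> has_pd i F p (pd i F p)"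
  unfolding smooth_on_def using has_pd_pd[of F p i] by (metis iter_pd_def foldr_Nil id_apply)

lemma smooth_on_imp_continuous_on: "smooth_on U F \<Longrightarrow> continuous_on U F"
  unfolding smooth_on_def by (metis iter_pd_def foldr_Nil id_apply)

lemma smooth_on_coinduct:
  assumes "open U" "F \<in> T"
    and T: "\<And>F. F \<in> T \<Longrightarrow> continuous_on U F \<and> (\<forall>i. \<exists>G\<in>T. \<forall>p\<in>U. has_pd i F p (G p))"
  shows "smooth_on U F"
proof -
  have "\<exists>G\<in>T. \<forall>p\<in>U. iter_pd is F p = G p" for "is"
  proof (induction "is")
    case Nil
    then show ?case using \<open>F \<in> T\<close> by (auto simp: iter_pd_def)
  next
    case (Cons i "is")
    then obtain G where G: "G \<in> T" "\<forall>p\<in>U. iter_pd is F p = G p" by blast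
    then obtain G' where G': "G' \<in> T" "\<forall>p\<in>U. has_pd i G p (G' p)" using T by blast
    have "pd i (iter_pd is F) p = G' p" if "p \<in> U" for p
      using pd_cong[OF \<open>open U\<close> that, of "iter_pd is F" G i] G(2) has_pd_imp_pd G'(2) that by simp
    then show ?case using G'(1) by (auto simp: iter_pd_def)
  qed
  then show ?thesis unfolding smooth_on_def
  proof (intro allI conjI ballI)
    fix "is" i p
    assume iter: "\<And>is. \<exists>G\<in>T. \<forall>p\<in>U. iter_pd is F p = G p"
    obtain G where G: "G \<in> T" "\<forall>p\<in>U. iter_pd is F p = G p" using iter by blast
    show "continuous_on U (iter_pd is F)"
      using T[OF G(1)] G(2) continuous_on_cong by fastforce
    assume "p \<in> U"
    obtain G' where "\<forall>p\<in>U. has_pd i G p (G' p)" using T[OF G(1)] by blast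
    then have "has_pd i (iter_pd is F) p (G' p)"
      using has_pd_cong[OF \<open>open U\<close> \<open>p \<in> U\<close>] G(2) \<open>p \<in> U\<close> by metis
    then show "(\<lambda>t. iter_pd is F (p + t *\<^sub>R axis i 1)) differentiable (at 0)"
      by (rule has_pd_imp_differentiable)
  qed
qed

inductive_set smooth_closure :: "(real^4) set \<Rightarrow> (real^4 \<Rightarrow> real) set" for U where
  "smooth_on U F \<Longrightarrow> F \<in> smooth_closure U"
| "(\<lambda>p. c) \<in> smooth_closure U"
| "F \<in> smooth_closure U \<Longrightarrow> G \<in> smooth_closure U \<Longrightarrow> (\<lambda>p. F p + G p) \<in> smooth_closure U"
| "F \<in> smooth_closure U \<Longrightarrow> G \<in> smooth_closure U \<Longrightarrow> (\<lambda>p. F p * G p) \<in> smooth_closure U"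
| "F \<in> smooth_closure U \<Longrightarrow> (\<lambda>p. exp (F p)) \<in> smooth_closure U"

lemma smooth_closure_has_pd:
  assumes "F \<in> smooth_closure U"
  shows "continuous_on U F \<and> (\<forall>i. \<exists>G\<in>smooth_closure U. \<forall>p\<in>U. has_pd i F p (G p))"
  using assms
proof induction
  case (1 F)
  then show ?case
    using smooth_on_imp_continuous_on smooth_on_has_pd smooth_on_pd smooth_closure.intros(1) by blast
next
  case (2 c)
  have "has_pd i (\<lambda>p. c) p 0" for i p unfolding has_pd_def by simp
  then show ?case using smooth_closure.intros(2)[of 0 U] by (auto intro!: bexI[of _ "\<lambda>p. 0"])
next
  case (3 F G)
  show ?case
  proof (intro conjI allI)
    fix i
    obtain F' G' where "F' \<in> smooth_closure U" "G' \<in> smooth_closure U"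
      "\<forall>p\<in>U. has_pd i F p (F' p)" "\<forall>p\<in>U. has_pd i G p (G' p)" using 3 by blast
    then show "\<exists>H\<in>smooth_closure U. \<forall>p\<in>U. has_pd i (\<lambda>p. F p + G p) p (H p)"
      by (intro bexI[of _ "\<lambda>p. F' p + G' p"] smooth_closure.intros(3))
        (auto simp: has_pd_def intro!: derivative_intros)
  qed (use 3 in \<open>auto intro!: continuous_intros\<close>)
next
  case (4 F G)
  show ?case
  proof (intro conjI allI)
    fix i
    obtain F' G' where "F' \<in> smooth_closure U" "G' \<in> smooth_closure U"
      "\<forall>p\<in>U. has_pd i F p (F' p)" "\<forall>p\<in>U. has_pd i G p (G' p)" using 4 by blast
    then show "\<exists>H\<in>smooth_closure U. \<forall>p\<in>U. has_pd i (\<lambda>p. F p * G p) p (H p)"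
      using 4 by (intro bexI[of _ "\<lambda>p. F' p * G p + F p * G' p"] smooth_closure.intros(3,4))
        (auto simp: has_pd_def intro!: derivative_eq_intros)
  qed (use 4 in \<open>auto intro!: continuous_intros\<close>)
next
  case (5 F)
  show ?case
  proof (intro conjI allI)
    fix i
    obtain F' where "F' \<in> smooth_closure U" "\<forall>p\<in>U. has_pd i F p (F' p)" using 5 by blast
    then show "\<exists>H\<in>smooth_closure U. \<forall>p\<in>U. has_pd i (\<lambda>p. exp (F p)) p (H p)"
      using 5 by (intro bexI[of _ "\<lambda>p. exp (F p) * F' p"] smooth_closure.intros(4,5))
        (auto simp: has_pd_def intro!: derivative_eq_intros)
  qed (use 5 in \<open>auto intro!: continuous_intros\<close>)
qed

lemma smooth_closure_smooth_on: "open U \<Longrightarrow> F \<in> smooth_closure U \<Longrightarrow> smooth_on U F"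
  using smooth_on_coinduct smooth_closure_has_pd by blast

lemma smooth_on_exp_mult:
  assumes "open U" "smooth_on U f" "smooth_on U G"
  shows "smooth_on U (\<lambda>p. exp (c * f p) * G p)"
proof (rule smooth_closure_smooth_on[OF assms(1)])
  have "f \<in> smooth_closure U" "G \<in> smooth_closure U"
    using assms(2,3) by (auto intro: smooth_closure.intros(1))
  then show "(\<lambda>p. exp (c * f p) * G p) \<in> smooth_closure U"
    by (intro smooth_closure.intros(2,4,5))
qed

lemma mvt_along_axis:
  assumes "0 < h" "\<And>s. 0 \<le> s \<Longrightarrow> s \<le> h \<Longrightarrow> has_pd i G (q + s *\<^sub>R axis i 1) (G' s)"
  shows "\<exists>x. 0 < x \<and> x < h \<and> G (q + h *\<^sub>R axis i 1) - G q = h * G' x"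
  using MVT2[OF assms(1), of "\<lambda>s. G (q + s *\<^sub>R axis i 1)" G'] assms(2) has_pd_along_line by simp

lemma dist_add_two_axes:
  fixes p :: "real^4"
  shows "dist (p + x *\<^sub>R axis i 1 + y *\<^sub>R axis j 1) p \<le> \<bar>x\<bar> + \<bar>y\<bar>"
  using norm_triangle_ineq[of "x *\<^sub>R axis i (1::real)" "y *\<^sub>R axis j (1::real)"]
  by (simp add: dist_norm add.assoc)

lemma second_difference_mvt:
  assumes "smooth_on U F" "ball p r \<subseteq> U" "0 < h" "2 * h < r"
  shows "\<exists>x y. 0 < x \<and> x < h \<and> 0 < y \<and> y < h \<and>
    F (p + h *\<^sub>R axis i 1 + h *\<^sub>R axis j 1) - F (p + h *\<^sub>R axis i 1) - F (p + h *\<^sub>R axis j 1) + F p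
      = h * h * pd j (pd i F) (p + x *\<^sub>R axis i 1 + y *\<^sub>R axis j 1)"
proof -
  have in_U: "p + x *\<^sub>R axis i 1 + y *\<^sub>R axis j 1 \<in> U" if "\<bar>x\<bar> \<le> h" "\<bar>y\<bar> \<le> h" for x y
    using dist_add_two_axes[of p x i y j] that assms(2,4) by (force simp: dist_commute)
  have "has_pd i (\<lambda>z. F (z + h *\<^sub>R axis j 1) - F z) (p + s *\<^sub>R axis i 1)
      (pd i F (p + s *\<^sub>R axis i 1 + h *\<^sub>R axis j 1) - pd i F (p + s *\<^sub>R axis i 1))"
    if "0 \<le> s" "s \<le> h" for s
    using smooth_on_has_pd[OF assms(1) in_U[of s h]] smooth_on_has_pd[OF assms(1) in_U[of s 0]] that
    unfolding has_pd_def by (auto simp: algebra_simps intro!: derivative_eq_intros)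
  from mvt_along_axis[OF assms(3) this] obtain x where x: "0 < x" "x < h"
    "F (p + h *\<^sub>R axis i 1 + h *\<^sub>R axis j 1) - F (p + h *\<^sub>R axis i 1) - F (p + h *\<^sub>R axis j 1) + F p
      = h * (pd i F (p + x *\<^sub>R axis i 1 + h *\<^sub>R axis j 1) - pd i F (p + x *\<^sub>R axis i 1))"
    by (auto simp: algebra_simps)
  have "has_pd j (pd i F) (p + x *\<^sub>R axis i 1 + s *\<^sub>R axis j 1) (pd j (pd i F) (p + x *\<^sub>R axis i 1 + s *\<^sub>R axis j 1))"
    if "0 \<le> s" "s \<le> h" for s
    using smooth_on_has_pd[OF smooth_on_pd[OF assms(1)] in_U] that x by simp
  from mvt_along_axis[OF assms(3) this] obtain y where "0 < y" "y < h"
    "pd i F (p + x *\<^sub>R axis i 1 + h *\<^sub>R axis j 1) - pd i F (p + x *\<^sub>R axis i 1)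
      = h * pd j (pd i F) (p + x *\<^sub>R axis i 1 + y *\<^sub>R axis j 1)"
    by blast
  then show ?thesis using x by (intro exI[of _ x] exI[of _ y]) simp
qed

lemma continuous_at_eq_if_equal_nearby:
  fixes A B :: "'a::metric_space \<Rightarrow> real"
  assumes "isCont A p" "isCont B p"
    and near: "\<And>\<delta>. \<delta> > 0 \<Longrightarrow> \<exists>x y. dist x p < \<delta> \<and> dist y p < \<delta> \<and> A x = B y"
  shows "A p = B p"
proof (rule ccontr)
  assume "A p \<noteq> B p"
  define \<epsilon> where "\<epsilon> = \<bar>A p - B p\<bar> / 2"
  have "\<epsilon> > 0" using \<open>A p \<noteq> B p\<close> unfolding \<epsilon>_def by simp
  obtain dA where dA: "dA > 0" "\<And>x. dist x p < dA \<Longrightarrow> dist (A x) (A p) < \<epsilon>"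
    using assms(1) \<open>\<epsilon> > 0\<close> unfolding continuous_at_eps_delta by blast
  obtain dB where dB: "dB > 0" "\<And>y. dist y p < dB \<Longrightarrow> dist (B y) (B p) < \<epsilon>"
    using assms(2) \<open>\<epsilon> > 0\<close> unfolding continuous_at_eps_delta by blast
  obtain x y where "dist x p < min dA dB" "dist y p < min dA dB" "A x = B y"
    using near[of "min dA dB"] dA(1) dB(1) by auto
  then have "dist (A x) (A p) < \<epsilon>" "dist (A x) (B p) < \<epsilon>"
    using dA(2)[of x] dB(2)[of y] by auto
  then show False unfolding \<epsilon>_def dist_real_def by (simp add: abs_less_iff abs_if split: if_split_asm)
qed

lemma pd_commute:
  assumes "open U" "smooth_on U F" "p \<in> U"
  shows "pd i (pd j F) p = pd j (pd i F) p"
proof -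
  have cont: "isCont (pd k (pd l F)) p" for k l
    using assms smooth_on_imp_continuous_on[OF smooth_on_pd[OF smooth_on_pd[OF assms(2)]]]
    by (auto simp: continuous_on_eq_continuous_at)
  obtain r where r: "r > 0" "ball p r \<subseteq> U" using assms(1,3) open_contains_ball by blast
  have "\<exists>x y. dist x p < \<delta> \<and> dist y p < \<delta> \<and> pd j (pd i F) x = pd i (pd j F) y" if "\<delta> > 0" for \<delta>
  proof -
    define h where "h = min r \<delta> / 4"
    have h: "0 < h" "2 * h < r" "2 * h < \<delta>" using r \<open>\<delta> > 0\<close> unfolding h_def by auto
    obtain x y where xy: "0 < x" "x < h" "0 < y" "y < h"
      "F (p + h *\<^sub>R axis i 1 + h *\<^sub>R axis j 1) - F (p + h *\<^sub>R axis i 1) - F (p + h *\<^sub>R axis j 1) + F p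
        = h * h * pd j (pd i F) (p + x *\<^sub>R axis i 1 + y *\<^sub>R axis j 1)"
      using second_difference_mvt[OF assms(2) r(2) h(1,2)] by blast
    obtain x' y' where xy': "0 < x'" "x' < h" "0 < y'" "y' < h"
      "F (p + h *\<^sub>R axis j 1 + h *\<^sub>R axis i 1) - F (p + h *\<^sub>R axis j 1) - F (p + h *\<^sub>R axis i 1) + F p
        = h * h * pd i (pd j F) (p + x' *\<^sub>R axis j 1 + y' *\<^sub>R axis i 1)"
      using second_difference_mvt[OF assms(2) r(2) h(1,2)] by blast
    have close: "dist (p + a *\<^sub>R axis k 1 + b *\<^sub>R axis l 1) p < \<delta>"
      if "0 < a" "a < h" "0 < b" "b < h" for a b k l
      using dist_add_two_axes[of p a k b l] that h by simp
    have "pd j (pd i F) (p + x *\<^sub>R axis i 1 + y *\<^sub>R axis j 1)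
        = pd i (pd j F) (p + x' *\<^sub>R axis j 1 + y' *\<^sub>R axis i 1)"
      using xy(5) xy'(5) h(1) by (simp add: algebra_simps)
    then show ?thesis using close xy xy' by blast
  qed
  then show ?thesis by (rule sym[OF continuous_at_eq_if_equal_nearby[OF cont cont]])
qed

definition pp_profile :: "(real \<Rightarrow> real \<Rightarrow> real \<Rightarrow> real) \<Rightarrow> real^4 \<Rightarrow> real" where
  "pp_profile H = (\<lambda>p. H (p$1) (p$3) (p$4))"

definition v_independent :: "(real^4 \<Rightarrow> real) \<Rightarrow> bool" where
  "v_independent G \<longleftrightarrow> (\<forall>p t. G (p + t *\<^sub>R axis 2 1) = G p)"

lemma v_independent_pp_profile: "v_independent (pp_profile H)"
  unfolding v_independent_def pp_profile_def by (simp add: axis_def)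

lemma v_independent_pd:
  assumes "v_independent G"
  shows "v_independent (pd i G)"
  unfolding v_independent_def
proof (intro allI)
  fix p t
  have "G (p + t *\<^sub>R axis 2 1 + s *\<^sub>R axis i 1) = G (p + s *\<^sub>R axis i 1)" for s
    using assms unfolding v_independent_def
    by (metis add.assoc add.commute)
  then show "pd i G (p + t *\<^sub>R axis 2 1) = pd i G p" unfolding pd_def by simp
qed

lemma v_independent_imp_pd_v: "v_independent G \<Longrightarrow> pd 2 G p = 0"
  unfolding v_independent_def pd_def by simp

lemma pd_ppwave: "pd a (ppwave H j l) p = (if j = 1 \<and> l = 1 then pd a (pp_profile H) p else 0)"
proof -
  have "ppwave H j l = (if j = 1 \<and> l = 1 then pp_profile H else
      (\<lambda>p. if (j = 1 \<and> l = 2) \<or> (j = 2 \<and> l = 1) \<or> (j = 3 \<and> l = 3) \<or> (j = 4 \<and> l = 4) then 1 else 0))"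
    by (auto simp: ppwave_def pp_profile_def fun_eq_iff)
  then show ?thesis by (simp add: pd_const)
qed

lemma matrix_inv_eqI:
  fixes A :: "'a::comm_ring_1^'n^'n"
  assumes "A ** B = mat 1" "B ** A = mat 1"
  shows "matrix_inv A = B"
proof -
  have "A ** matrix_inv A = mat 1 \<and> matrix_inv A ** A = mat 1"
    using someI_ex[of "\<lambda>A'. A ** A' = mat 1 \<and> A' ** A = mat 1"] assms
    unfolding matrix_inv_def by blast
  then have "matrix_inv A = (matrix_inv A ** A) ** B"
    using assms(1) by (metis matrix_mul_assoc matrix_mul_rid)
  then show ?thesis
    using \<open>A ** matrix_inv A = mat 1 \<and> matrix_inv A ** A = mat 1\<close> by simp
qed

lemma ginv_ppwave:
  "ginv (ppwave H) k l p =
     (if (k = 1 \<and> l = 2) \<or> (k = 2 \<and> l = 1) \<or> (k = 3 \<and> l = 3) \<or> (k = 4 \<and> l = 4) then 1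
      else if k = 2 \<and> l = 2 then - H (p$1) (p$3) (p$4) else 0)"
proof -
  have "matrix_inv (\<chi> i j. ppwave H i j p) =
     (\<chi> k l. if (k = 1 \<and> l = 2) \<or> (k = 2 \<and> l = 1) \<or> (k = 3 \<and> l = 3) \<or> (k = 4 \<and> l = 4) then 1
        else if k = 2 \<and> l = 2 then - H (p$1) (p$3) (p$4) else 0)"
    by (rule matrix_inv_eqI)
      (simp_all add: vec_eq_iff matrix_matrix_mult_def sum_4 forall_4 mat_def ppwave_def)
  then show ?thesis by (simp add: ginv_def)
qed

text \<open>The nonzero Christoffel symbols of the pp-wave are \<open>\<Gamma>\<^sup>v\<^sub>u\<^sub>u = \<partial>\<^sub>u H/2\<close>,
  \<open>\<Gamma>\<^sup>x\<^sup>a\<^sub>u\<^sub>u = -\<partial>\<^sub>x\<^sub>a H/2\<close> and \<open>\<Gamma>\<^sup>v\<^sub>u\<^sub>x\<^sub>a = \<Gamma>\<^sup>v\<^sub>x\<^sub>a\<^sub>u = \<partial>\<^sub>x\<^sub>a H/2\<close>;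
  \<open>pp_chr_coeff k i j m\<close> is the coefficient of \<open>\<partial>\<^sub>m H\<close> in \<open>\<Gamma>\<^sup>k\<^sub>i\<^sub>j\<close>.\<close>
definition pp_chr_coeff :: "4 \<Rightarrow> 4 \<Rightarrow> 4 \<Rightarrow> 4 \<Rightarrow> real" where
  "pp_chr_coeff k i j m =
     (if k = 2 \<and> i = 1 \<and> j = 1 \<and> m = 1 then 1/2
      else if (k = 3 \<or> k = 4) \<and> i = 1 \<and> j = 1 \<and> m = k then -1/2
      else if k = 2 \<and> (m = 3 \<or> m = 4) \<and> ((i = 1 \<and> j = m) \<or> (i = m \<and> j = 1)) then 1/2
      else 0)"

lemma chr_ppwave: "chr (ppwave H) k i j p = (\<Sum>m\<in>UNIV. pp_chr_coeff k i j m * pd m (pp_profile H) p)"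
proof -
  have "pd 2 (pp_profile H) p = 0"
    using v_independent_imp_pd_v[OF v_independent_pp_profile] .
  then show ?thesis
    unfolding chr_def ginv_ppwave pd_ppwave
    using exhaust_4[of k] exhaust_4[of i] exhaust_4[of j]
    by (auto simp: sum_4 pp_chr_coeff_def pp_profile_def)
qed

lemma riem_ppwave:
  assumes "smooth_on U (pp_profile H)" "p \<in> U"
  shows "riem (ppwave H) l i j k p =
    (\<Sum>m\<in>UNIV. pp_chr_coeff l j k m * pd i (pd m (pp_profile H)) p)
    - (\<Sum>m\<in>UNIV. pp_chr_coeff l i k m * pd j (pd m (pp_profile H)) p)"
proof -
  have "pd a (chr (ppwave H) l j k) p = (\<Sum>m\<in>UNIV. pp_chr_coeff l j k m * pd a (pd m (pp_profile H)) p)"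
    for a l j k
  proof (rule has_pd_imp_pd)
    have "chr (ppwave H) l j k = (\<lambda>q. \<Sum>m\<in>UNIV. pp_chr_coeff l j k m * pd m (pp_profile H) q)"
      by (simp add: fun_eq_iff chr_ppwave)
    moreover have "has_pd a (pd m (pp_profile H)) p (pd a (pd m (pp_profile H)) p)" for m
      using smooth_on_has_pd[OF smooth_on_pd[OF assms(1)] assms(2)] .
    ultimately show "has_pd a (chr (ppwave H) l j k) p
        (\<Sum>m\<in>UNIV. pp_chr_coeff l j k m * pd a (pd m (pp_profile H)) p)"
      unfolding has_pd_def sum_4 by (auto intro!: derivative_eq_intros)
  qed
  moreover have "(\<Sum>m\<in>UNIV. chr (ppwave H) m j k p * chr (ppwave H) l i m p
      - chr (ppwave H) m i k p * chr (ppwave H) l j m p) = 0"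
    unfolding chr_ppwave
    using exhaust_4[of i] exhaust_4[of j] exhaust_4[of k] exhaust_4[of l]
    by (auto simp: sum_4 pp_chr_coeff_def)
  ultimately show ?thesis unfolding riem_def by simp
qed

lemma ricci_ppwave:
  assumes "smooth_on U (pp_profile H)" "p \<in> U"
  shows "ricci (ppwave H) j k p =
    (if j = 1 \<and> k = 1 then - (pd 3 (pd 3 (pp_profile H)) p + pd 4 (pd 4 (pp_profile H)) p) / 2 else 0)"
proof -
  have "pd 2 (pd m (pp_profile H)) p = 0" for m
    by (intro v_independent_imp_pd_v v_independent_pd v_independent_pp_profile)
  then show ?thesis
    unfolding ricci_def riem_ppwave[OF assms]
    using exhaust_4[of j] exhaust_4[of k] by (auto simp: sum_4 pp_chr_coeff_def)
qed

lemma weyl_ppwave_eq_0: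
  assumes "open U" "smooth_on U (pp_profile H)" "p \<in> U"
    and "pd 3 (pd 3 (pp_profile H)) p = pd 4 (pd 4 (pp_profile H)) p"
    and "pd 3 (pd 4 (pp_profile H)) p = 0"
  shows "weyl (ppwave H) i j k l p = 0"
proof -
  have sym: "pd a (pd b (pp_profile H)) p = pd b (pd a (pp_profile H)) p" for a b
    using pd_commute[OF assms(1-3)] .
  have v: "pd 2 (pd m (pp_profile H)) p = 0" for m
    by (intro v_independent_imp_pd_v v_independent_pd v_independent_pp_profile)
  then have "pd m (pd 2 (pp_profile H)) p = 0" for m
    using sym by metis
  moreover have "pd 4 (pd 3 (pp_profile H)) p = 0"
    using assms(5) sym by metis
  ultimately show ?thesis
    unfolding weyl_def rm_def scal_def ricci_ppwave[OF assms(2,3)] riem_ppwave[OF assms(2,3)] ginv_ppwave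
    using exhaust_4[of i] exhaust_4[of j] exhaust_4[of k] exhaust_4[of l] assms(4,5) v sym[of 3 1] sym[of 4 1]
    by (auto simp: sum_4 pp_chr_coeff_def ppwave_def algebra_simps)
qed

lemma gronwall_zero:
  fixes E E' :: "real \<Rightarrow> real"
  assumes "t0 \<le> t" "continuous_on {t0..t} E"
    and "\<And>x. t0 < x \<Longrightarrow> x < t \<Longrightarrow> (E has_real_derivative E' x) (at x)"
    and "\<And>x. t0 < x \<Longrightarrow> x < t \<Longrightarrow> E' x \<le> M * E x"
    and "E t0 = 0" "E t \<ge> 0"
  shows "E t = 0"
proof -
  have "E t * exp (- M * t) \<le> E t0 * exp (- M * t0)"
  proof (rule DERIV_nonpos_imp_decreasing_open[OF assms(1)])
    fix x assume x: "t0 < x" "x < t"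
    have "((\<lambda>s. E s * exp (- M * s)) has_real_derivative (E' x - M * E x) * exp (- M * x)) (at x)"
      using assms(3)[OF x] by (auto intro!: derivative_eq_intros simp: algebra_simps)
    moreover have "(E' x - M * E x) * exp (- M * x) \<le> 0"
      using assms(4)[OF x] by (simp add: mult_nonpos_nonneg)
    ultimately show "\<exists>y. ((\<lambda>s. E s * exp (- M * s)) has_real_derivative y) (at x) \<and> y \<le> 0" by blast
  qed (use assms(2) in \<open>intro continuous_intros\<close>)
  then show ?thesis using assms(5,6) by (simp add: mult_le_0_iff)
qed

lemma second_order_linear_ode_unique:
  fixes a a' k :: "real \<Rightarrow> real"
  assumes "c < t0" "t0 < d" "c < t" "t < d"
    and a: "\<And>s. c < s \<Longrightarrow> s < d \<Longrightarrow> (a has_real_derivative a' s) (at s)"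
    and a': "\<And>s. c < s \<Longrightarrow> s < d \<Longrightarrow> (a' has_real_derivative k s * a s) (at s)"
    and "continuous_on {c..d} k"
    and "a t0 = 0" "a' t0 = 0"
  shows "a t = 0"
proof -
  have "bounded (k ` {c..d})"
    using compact_imp_bounded[OF compact_continuous_image[OF assms(7)]] by simp
  then obtain K where K: "\<And>s. s \<in> {c..d} \<Longrightarrow> \<bar>k s\<bar> \<le> K"
    unfolding bounded_iff by force
  define E where "E s = (a s)\<^sup>2 + (a' s)\<^sup>2" for s
  define E' where "E' s = 2 * a s * a' s * (1 + k s)" for s
  have E: "(E has_real_derivative E' s) (at s)" if "c < s" "s < d" for s
    unfolding E_def E'_def using a[OF that] a'[OF that]
    by (auto intro!: derivative_eq_intros simp: algebra_simps power2_eq_square)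
  have E_cont: "continuous_on {x..y} E" if "c < x" "y < d" for x y
    using E that by (intro has_real_derivative_imp_continuous_on[where f' = E']) auto
  have E'_bound: "\<bar>E' s\<bar> \<le> (1 + K) * E s" if "c < s" "s < d" for s
  proof -
    have "\<bar>1 + k s\<bar> \<le> 1 + K" using K[of s] that by auto
    moreover have "2 * \<bar>a s\<bar> * \<bar>a' s\<bar> \<le> E s"
      unfolding E_def using sum_squares_bound[of "\<bar>a s\<bar>" "\<bar>a' s\<bar>"] by simp
    ultimately have "2 * \<bar>a s\<bar> * \<bar>a' s\<bar> * \<bar>1 + k s\<bar> \<le> E s * (1 + K)"
      by (intro mult_mono) (auto simp: E_def)
    moreover have "\<bar>E' s\<bar> = 2 * \<bar>a s\<bar> * \<bar>a' s\<bar> * \<bar>1 + k s\<bar>"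
      unfolding E'_def by (simp add: abs_mult)
    ultimately show ?thesis by (simp add: mult.commute)
  qed
  have "E t0 = 0" unfolding E_def using assms(8,9) by simp
  have "E t = 0"
  proof (cases "t0 \<le> t")
    case True
    show ?thesis
    proof (rule gronwall_zero[OF True E_cont, of E' "1 + K"])
      show "E' x \<le> (1 + K) * E x" if "t0 < x" "x < t" for x
        using E'_bound[of x] that assms(1-4) by (simp add: abs_le_iff)
    qed (use E assms(1-4) \<open>E t0 = 0\<close> in \<open>auto simp: E_def\<close>)
  next
    case False
    have "E (- (- t)) = 0"
    proof (rule gronwall_zero[of "- t0" "- t" "\<lambda>s. E (- s)" "\<lambda>s. - E' (- s)" "1 + K"])
      show "continuous_on {- t0..- t} (\<lambda>s. E (- s))"
        using assms(1-4) by (intro continuous_on_compose2[OF E_cont[of t t0]] continuous_intros) auto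
      show "((\<lambda>s. E (- s)) has_real_derivative - E' (- x)) (at x)" if "- t0 < x" "x < - t" for x
        using E[of "- x"] that assms(1-4) DERIV_mirror[where f = E and x = x] by simp
      show "- E' (- x) \<le> (1 + K) * E (- x)" if "- t0 < x" "x < - t" for x
        using E'_bound[of "- x"] that assms(1-4) by (simp add: abs_le_iff)
      show "- t0 \<le> - t" "E (- (- t0)) = 0" "E (- (- t)) \<ge> 0"
        using False \<open>E t0 = 0\<close> by (simp_all add: E_def)
    qed
    then show ?thesis by simp
  qed
  then show ?thesis unfolding E_def by (simp add: add_nonneg_eq_0_iff)
qed

lemma has_pd_zero_imp_constant_along_axis:
  assumes "convex S" "\<And>y. y \<in> S \<Longrightarrow> has_pd j G y 0" "q \<in> S" "q + t *\<^sub>R axis j 1 \<in> S"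
  shows "G (q + t *\<^sub>R axis j 1) = G q"
proof -
  define T where "T = {s. q + s *\<^sub>R axis j 1 \<in> S}"
  have "convex T"
  proof (rule convexI)
    fix x y u v :: real assume "x \<in> T" "y \<in> T" "0 \<le> u" "0 \<le> v" "u + v = 1"
    then have "u *\<^sub>R (q + x *\<^sub>R axis j 1) + v *\<^sub>R (q + y *\<^sub>R axis j 1) \<in> S"
      using \<open>convex S\<close> unfolding convex_def T_def by blast
    moreover have "u *\<^sub>R (q + x *\<^sub>R axis j 1) + v *\<^sub>R (q + y *\<^sub>R axis j 1) = q + (u * x + v * y) *\<^sub>R axis j 1"
      using \<open>u + v = 1\<close> by (simp add: algebra_simps flip: scaleR_add_left)
    ultimately show "u *\<^sub>R x + v *\<^sub>R y \<in> T" unfolding T_def by simp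
  qed
  moreover have "((\<lambda>s. G (q + s *\<^sub>R axis j 1)) has_real_derivative 0) (at s within T)" if "s \<in> T" for s
    using has_pd_along_line assms(2) that unfolding T_def by (blast intro: has_field_derivative_at_within)
  ultimately obtain c where "\<forall>s\<in>T. G (q + s *\<^sub>R axis j 1) = c"
    using has_field_derivative_zero_constant by blast
  moreover have "0 \<in> T" "t \<in> T" using assms(3,4) unfolding T_def by auto
  ultimately show ?thesis by force
qed

definition u_line :: "real^4 \<Rightarrow> real \<Rightarrow> real^4" where
  "u_line p t = p + (t - p$1) *\<^sub>R axis 1 1"

lemma dist_u_line: "dist (u_line p t) p = \<bar>t - p$1\<bar>"
  by (simp add: u_line_def dist_norm)

lemma u_line_component_1: "u_line p t $ 1 = t"
  by (simp add: u_line_def axis_def)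

lemma has_pd_u_line:
  assumes "has_pd 1 G (u_line p t) D"
  shows "((\<lambda>t. G (u_line p t)) has_real_derivative D) (at t)"
proof -
  have "u_line p s = (p - (p$1) *\<^sub>R axis 1 1) + s *\<^sub>R axis 1 1" for s
    by (simp add: u_line_def algebra_simps)
  then show ?thesis
    using has_pd_along_line[of 1 G "p - (p$1) *\<^sub>R axis 1 1" t D] assms by simp
qed

lemma u_line_value_in_ball:
  assumes "\<And>y j. y \<in> ball p r \<Longrightarrow> j \<noteq> 1 \<Longrightarrow> has_pd j G y 0" "q \<in> ball p r"
  shows "G q = G (u_line p (q$1))"
proof -
  have move: "G (y + (p$j - y$j) *\<^sub>R axis j 1) = G y \<and> y + (p$j - y$j) *\<^sub>R axis j 1 \<in> ball p r"
    if "y \<in> ball p r" "j \<noteq> 1" for y j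
  proof
    have "norm (y + (p$j - y$j) *\<^sub>R axis j 1 - p) \<le> norm (y - p)"
      by (rule norm_le_componentwise_cart) (simp add: axis_def)
    then show "y + (p$j - y$j) *\<^sub>R axis j 1 \<in> ball p r"
      using that(1) by (simp add: dist_norm norm_minus_commute)
    then show "G (y + (p$j - y$j) *\<^sub>R axis j 1) = G y"
      using has_pd_zero_imp_constant_along_axis[of "ball p r" j G y] assms(1) that by simp
  qed
  define q2 where "q2 = q + (p$2 - q$2) *\<^sub>R axis 2 1"
  define q3 where "q3 = q2 + (p$3 - q2$3) *\<^sub>R axis 3 1"
  define q4 where "q4 = q3 + (p$4 - q3$4) *\<^sub>R axis 4 1"
  have "G q = G q4"
    using move[OF assms(2), of 2] move[of q2 3] move[of q3 4] unfolding q2_def q3_def q4_def by simp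
  moreover have "q4 = u_line p (q$1)"
    unfolding q4_def q3_def q2_def u_line_def vec_eq_iff forall_4 by (simp add: axis_def)
  ultimately show ?thesis by simp
qed

lemma u_ode_local_unique_continuation:
  assumes "open U" "p \<in> U" "p \<in> closure (interior {q. \<psi> q = 0})"
    and \<psi>: "\<And>q j. q \<in> U \<Longrightarrow> j \<noteq> 1 \<Longrightarrow> has_pd j \<psi> q 0"
    and \<psi>_u: "\<And>q. q \<in> U \<Longrightarrow> has_pd 1 \<psi> q (L q)"
    and L_u: "\<And>q. q \<in> U \<Longrightarrow> has_pd 1 L q (k q * \<psi> q)"
    and "continuous_on U k"
  shows "p \<in> interior {q. \<psi> q = 0}"
proof -
  obtain r where r: "r > 0" "ball p r \<subseteq> U" using assms(1,2) open_contains_ball by blast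
  define s where "s = r / 2"
  have s: "0 < s" "s < r" "r = 2 * s" using r unfolding s_def by auto
  define a where "a t = \<psi> (u_line p t)" for t
  have on_line: "\<psi> q = a (q$1)" if "q \<in> ball p r" for q
    unfolding a_def using u_line_value_in_ball[OF _ that] r(2) \<psi> by blast
  have line_in_U: "u_line p t \<in> U" if "\<bar>t - p$1\<bar> < r" for t
    using r(2) that dist_u_line[of p t] by (auto simp: dist_commute)
  have a: "(a has_real_derivative L (u_line p t)) (at t)"
    and a': "((\<lambda>t. L (u_line p t)) has_real_derivative k (u_line p t) * a t) (at t)"
    if "p$1 - s < t" "t < p$1 + s" for t
    using has_pd_u_line[OF \<psi>_u] has_pd_u_line[OF L_u] line_in_U[of t] that s unfolding a_def
    by (auto simp: abs_less_iff)
  have k_cont: "continuous_on {p$1 - s..p$1 + s} (\<lambda>t. k (u_line p t))"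
    using line_in_U s unfolding u_line_def
    by (intro continuous_on_compose2[OF assms(7)] continuous_intros) (auto simp: abs_le_iff)
  obtain z where z: "z \<in> interior {q. \<psi> q = 0}" "dist z p < s"
    using assms(3) s(1) unfolding closure_approachable by blast
  then obtain \<delta> where \<delta>: "\<delta> > 0" "ball z \<delta> \<subseteq> {q. \<psi> q = 0}"
    using mem_interior by blast
  have z1: "\<bar>z$1 - p$1\<bar> < s"
    using component_le_norm_cart[of "z - p" 1] z(2) by (simp add: dist_norm)
  have a_zero_near_z: "a t = 0" if "t \<in> ball (z$1) (min \<delta> s)" for t
  proof -
    have "dist (u_line z t) z < min \<delta> s"
      using that dist_u_line[of z t] by (simp add: dist_real_def abs_minus_commute)
    then have "u_line z t \<in> ball z \<delta>" "u_line z t \<in> ball p r"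
      using z(2) dist_triangle[of "u_line z t" p z] s by (auto simp: dist_commute)
    then show ?thesis using on_line \<delta>(2) u_line_component_1 by force
  qed
  have "a (z$1) = 0" using a_zero_near_z \<delta>(1) s(1) by simp
  moreover have "L (u_line p (z$1)) = 0"
  proof (rule DERIV_unique)
    show "(a has_real_derivative L (u_line p (z$1))) (at (z$1))" using a z1 by (simp add: abs_less_iff)
    show "(a has_real_derivative 0) (at (z$1))"
      by (rule has_field_derivative_transform_within_open[of "\<lambda>_. 0" _ _ "ball (z$1) (min \<delta> s)"])
        (use a_zero_near_z \<delta>(1) s(1) in auto)
  qed
  ultimately have "a t = 0" if "\<bar>t - p$1\<bar> < s" for t
    using second_order_linear_ode_unique[of "p$1 - s" "z$1" "p$1 + s" t a, OF _ _ _ _ a a' k_cont] z1 that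
    by (auto simp: abs_less_iff)
  moreover have "\<bar>q$1 - p$1\<bar> < s" if "q \<in> ball p s" for q
    using component_le_norm_cart[of "q - p" 1] that by (simp add: dist_norm norm_minus_commute)
  ultimately have "ball p s \<subseteq> {q. \<psi> q = 0}"
    using on_line s(2) by auto
  then show ?thesis using s(1) mem_interior by blast
qed

lemma u_ode_unique_continuation:
  assumes "open U" "connected U" "open V" "V \<subseteq> U" "V \<noteq> {}" "\<And>q. q \<in> V \<Longrightarrow> \<psi> q = 0"
    and \<psi>: "\<And>q j. q \<in> U \<Longrightarrow> j \<noteq> 1 \<Longrightarrow> has_pd j \<psi> q 0"
    and \<psi>_u: "\<And>q. q \<in> U \<Longrightarrow> has_pd 1 \<psi> q (L q)"
    and L_u: "\<And>q. q \<in> U \<Longrightarrow> has_pd 1 L q (k q * \<psi> q)"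
    and "continuous_on U k" "q \<in> U"
  shows "\<psi> q = 0"
proof -
  define Z where "Z = interior {q. \<psi> q = 0}"
  have "p \<in> Z" if "p \<in> U" "p \<in> closure Z" for p
    using u_ode_local_unique_continuation[OF assms(1) that[unfolded Z_def] \<psi> \<psi>_u L_u assms(10)]
    unfolding Z_def .
  then have "U \<inter> Z = U \<inter> closure Z"
    using closure_subset[of Z] by blast
  then have "closedin (top_of_set U) (U \<inter> Z)"
    by (simp add: closedin_closed_Int)
  moreover have "openin (top_of_set U) (U \<inter> Z)"
    unfolding Z_def by (simp add: openin_open_Int)
  moreover have "V \<subseteq> U \<inter> Z"
    using assms(3,4,6) interior_maximal[of V "{q. \<psi> q = 0}"] unfolding Z_def by auto
  ultimately have "U \<inter> Z = {} \<or> U \<inter> Z = U"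
    using assms(2) unfolding connected_clopen by simp
  then have "U \<inter> Z = U"
    using \<open>V \<subseteq> U \<inter> Z\<close> assms(5) by blast
  then show ?thesis
    using assms(11) interior_subset unfolding Z_def by blast
qed

definition scaled_pd :: "real \<Rightarrow> (real^4 \<Rightarrow> real) \<Rightarrow> 4 \<Rightarrow> real^4 \<Rightarrow> real" where
  "scaled_pd \<mu> f j = (\<lambda>q. exp (- \<mu> * f q) * pd j f q)"

lemma has_pd_scaled_pd:
  assumes "smooth_on U f" "q \<in> U"
    and "hes g f i j q + ricci g i j q - \<mu> * pd i f q * pd j f q = l * g i j q"
  shows "has_pd i (scaled_pd \<mu> f j) q
    (exp (- \<mu> * f q) * (l * g i j q - ricci g i j q) + (\<Sum>k\<in>UNIV. chr g k i j q * scaled_pd \<mu> f k q))"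
proof -
  have "has_pd i (scaled_pd \<mu> f j) q (exp (- \<mu> * f q) * (pd i (pd j f) q - \<mu> * pd i f q * pd j f q))"
    using smooth_on_has_pd[OF assms(1,2)] smooth_on_has_pd[OF smooth_on_pd[OF assms(1)] assms(2)]
    unfolding has_pd_def scaled_pd_def by (auto intro!: derivative_eq_intros simp: algebra_simps)
  moreover have "pd i (pd j f) q - \<mu> * pd i f q * pd j f q
      = l * g i j q - ricci g i j q + (\<Sum>k\<in>UNIV. chr g k i j q * pd k f q)"
    using assms(3) unfolding hes_def by simp
  moreover have "exp (- \<mu> * f q) * (l * g i j q - ricci g i j q + (\<Sum>k\<in>UNIV. chr g k i j q * pd k f q))
      = exp (- \<mu> * f q) * (l * g i j q - ricci g i j q) + (\<Sum>k\<in>UNIV. chr g k i j q * scaled_pd \<mu> f k q)"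
    by (simp add: scaled_pd_def sum_distrib_left algebra_simps)
  ultimately show ?thesis by simp
qed

lemma ppwave_has_pd_scaled_pd:
  assumes "smooth_on U (pp_profile H)" "smooth_on U f" "q \<in> U" "j \<noteq> 1"
    and "hes (ppwave H) f i j q + ricci (ppwave H) i j q - \<mu> * pd i f q * pd j f q = l * ppwave H i j q"
  shows "has_pd i (scaled_pd \<mu> f j) q (exp (- \<mu> * f q) * l * ppwave H i j q
    + (if i = 1 then pd j (pp_profile H) q / 2 * scaled_pd \<mu> f 2 q else 0))"
proof -
  have "pd 2 (pp_profile H) q = 0"
    by (intro v_independent_imp_pd_v v_independent_pp_profile)
  then have "(\<Sum>k\<in>UNIV. chr (ppwave H) k i j q * scaled_pd \<mu> f k q)
      = (if i = 1 then pd j (pp_profile H) q / 2 * scaled_pd \<mu> f 2 q else 0)"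
    unfolding chr_ppwave using exhaust_4[of i] exhaust_4[of j] assms(4)
    by (auto simp: sum_4 pp_chr_coeff_def)
  then show ?thesis
    using has_pd_scaled_pd[OF assms(2,3,5)] ricci_ppwave[OF assms(1,3)] assms(4)
    by (simp add: mult.assoc)
qed

lemma ppwave_quasi_einstein_system:
  assumes "open U" "smooth_on U (pp_profile H)" "smooth_on U f" "quasi_einstein U (ppwave H) f \<mu>"
  obtains L where
    "\<And>q j. q \<in> U \<Longrightarrow> j \<noteq> 1 \<Longrightarrow> has_pd j (scaled_pd \<mu> f 2) q 0"
    "\<And>q. q \<in> U \<Longrightarrow> has_pd 1 (scaled_pd \<mu> f 2) q (L q)"
    "\<And>q. q \<in> U \<Longrightarrow> has_pd 1 L q (pd 3 (pd 3 (pp_profile H)) q / 2 * scaled_pd \<mu> f 2 q)"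
    "\<And>q. q \<in> U \<Longrightarrow> (pd 3 (pd 3 (pp_profile H)) q - pd 4 (pd 4 (pp_profile H)) q) * scaled_pd \<mu> f 2 q = 0"
    "\<And>q. q \<in> U \<Longrightarrow> pd 3 (pd 4 (pp_profile H)) q * scaled_pd \<mu> f 2 q = 0"
proof -
  obtain lam where "smooth_on U lam" and QE: "\<And>q i j. q \<in> U \<Longrightarrow>
      hes (ppwave H) f i j q + ricci (ppwave H) i j q - \<mu> * pd i f q * pd j f q = lam q * ppwave H i j q"
    using assms(4) unfolding quasi_einstein_def by blast
  define L where "L q = exp (- \<mu> * f q) * lam q" for q
  define \<psi> where "\<psi> = scaled_pd \<mu> f 2"
  have L_smooth: "smooth_on U L"
    unfolding L_def by (rule smooth_on_exp_mult[OF assms(1,3) \<open>smooth_on U lam\<close>])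
  have r_smooth: "smooth_on U (scaled_pd \<mu> f j)" for j
    unfolding scaled_pd_def by (rule smooth_on_exp_mult[OF assms(1,3) smooth_on_pd[OF assms(3)]])
  have D: "has_pd i (scaled_pd \<mu> f j) q
      (L q * ppwave H i j q + (if i = 1 then pd j (pp_profile H) q / 2 * \<psi> q else 0))"
    if "q \<in> U" "j \<noteq> 1" for q i j
    using ppwave_has_pd_scaled_pd[OF assms(2,3) that QE[OF that(1)]] unfolding L_def \<psi>_def by simp
  have \<psi>_v: "has_pd j \<psi> q 0" if "q \<in> U" "j \<noteq> 1" for q j
    using D[OF that(1), of 2 j] that(2) exhaust_4[of j] by (auto simp: ppwave_def \<psi>_def)
  have "pd 2 (pp_profile H) q = 0" for q
    by (intro v_independent_imp_pd_v v_independent_pp_profile)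
  then have \<psi>_u: "has_pd 1 \<psi> q (L q)" if "q \<in> U" for q
    using D[OF that, of 2 1] by (simp add: ppwave_def \<psi>_def)
  have cross: "ppwave H b a q * pd 1 L q = pd b (pd a (pp_profile H)) q / 2 * \<psi> q"
    if q: "q \<in> U" and ab: "a \<in> {3, 4}" "b \<in> {3, 4}" for q a b
  proof -
    have "ppwave H b a p = ppwave H b a q" for p using ab by (auto simp: ppwave_def)
    then have pd_b: "pd b (scaled_pd \<mu> f a) p = L p * ppwave H b a q" if "p \<in> U" for p
      using has_pd_imp_pd[OF D[OF that, of a b]] ab by auto
    have pd_1: "pd 1 (scaled_pd \<mu> f a) p = pd a (pp_profile H) p / 2 * \<psi> p" if "p \<in> U" for p
      using has_pd_imp_pd[OF D[OF that, of a 1]] ab by (auto simp: ppwave_def)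
    have "ppwave H b a q * pd 1 L q = pd 1 (\<lambda>p. L p * ppwave H b a q) q"
      using smooth_on_has_pd[OF L_smooth q]
      by (intro has_pd_imp_pd[symmetric]) (auto simp: has_pd_def intro!: derivative_eq_intros)
    also have "\<dots> = pd 1 (pd b (scaled_pd \<mu> f a)) q"
      using pd_b by (intro pd_cong[OF assms(1) q]) simp
    also have "\<dots> = pd b (pd 1 (scaled_pd \<mu> f a)) q"
      using pd_commute[OF assms(1) r_smooth q] .
    also have "\<dots> = pd b (\<lambda>p. pd a (pp_profile H) p / 2 * \<psi> p) q"
      using pd_1 by (intro pd_cong[OF assms(1) q]) simp
    also have "\<dots> = pd b (pd a (pp_profile H)) q / 2 * \<psi> q"
      using smooth_on_has_pd[OF smooth_on_pd[OF assms(2)] q] \<psi>_v[OF q, of b] ab(2)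
      by (intro has_pd_imp_pd) (auto simp: has_pd_def intro!: derivative_eq_intros)
    finally show ?thesis .
  qed
  show thesis
  proof (rule that[of L])
    show "has_pd 1 L q (pd 3 (pd 3 (pp_profile H)) q / 2 * scaled_pd \<mu> f 2 q)" if "q \<in> U" for q
    proof -
      have "pd 1 L q = pd 3 (pd 3 (pp_profile H)) q / 2 * scaled_pd \<mu> f 2 q"
        using cross[OF that, of 3 3] by (simp add: ppwave_def \<psi>_def)
      then show ?thesis using smooth_on_has_pd[OF L_smooth that, of 1] by metis
    qed
    show "(pd 3 (pd 3 (pp_profile H)) q - pd 4 (pd 4 (pp_profile H)) q) * scaled_pd \<mu> f 2 q = 0"
      if "q \<in> U" for q
      using cross[OF that, of 3 3] cross[OF that, of 4 4] by (simp add: ppwave_def \<psi>_def algebra_simps)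
    show "pd 3 (pd 4 (pp_profile H)) q * scaled_pd \<mu> f 2 q = 0" if "q \<in> U" for q
      using cross[OF that, of 4 3] by (simp add: ppwave_def \<psi>_def)
  qed (use \<psi>_v \<psi>_u in \<open>auto simp: \<psi>_def\<close>)
qed

theorem lemma3p3:
  fixes U :: "(real^4) set" and H :: "real \<Rightarrow> real \<Rightarrow> real \<Rightarrow> real"
    and f :: "real^4 \<Rightarrow> real" and \<mu> :: real
  assumes "open U" and "connected U" and "U \<noteq> {}"
    and "smooth_on U (\<lambda>p. H (p$1) (p$3) (p$4))"
    and "\<exists>p\<in>U. \<exists>i j k l. weyl (ppwave H) i j k l p \<noteq> 0"
    and "smooth_on U f"
    and "quasi_einstein U (ppwave H) f \<mu>"
  shows "\<forall>p\<in>U. pd 2 f p = 0"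
proof -
  have H: "smooth_on U (pp_profile H)" using assms(4) unfolding pp_profile_def .
  obtain L where \<psi>: "\<And>q j. q \<in> U \<Longrightarrow> j \<noteq> 1 \<Longrightarrow> has_pd j (scaled_pd \<mu> f 2) q 0"
    and \<psi>_u: "\<And>q. q \<in> U \<Longrightarrow> has_pd 1 (scaled_pd \<mu> f 2) q (L q)"
    and L_u: "\<And>q. q \<in> U \<Longrightarrow> has_pd 1 L q (pd 3 (pd 3 (pp_profile H)) q / 2 * scaled_pd \<mu> f 2 q)"
    and diag: "\<And>q. q \<in> U \<Longrightarrow> (pd 3 (pd 3 (pp_profile H)) q - pd 4 (pd 4 (pp_profile H)) q) * scaled_pd \<mu> f 2 q = 0"
    and off_diag: "\<And>q. q \<in> U \<Longrightarrow> pd 3 (pd 4 (pp_profile H)) q * scaled_pd \<mu> f 2 q = 0"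
    using ppwave_quasi_einstein_system[OF assms(1) H assms(6,7)] by blast
  define W where "W q = (pd 3 (pd 3 (pp_profile H)) q - pd 4 (pd 4 (pp_profile H)) q)\<^sup>2
    + (pd 3 (pd 4 (pp_profile H)) q)\<^sup>2" for q
  define V where "V = U \<inter> W -` {0<..}"
  have "open V"
    unfolding V_def W_def using smooth_on_imp_continuous_on[OF smooth_on_pd[OF smooth_on_pd[OF H]]] assms(1)
    by (intro continuous_open_preimage continuous_intros) auto
  moreover have "V \<noteq> {}"
    using assms(5) weyl_ppwave_eq_0[OF assms(1) H] unfolding V_def W_def
    by (fastforce simp: sum_power2_gt_zero_iff)
  moreover have "scaled_pd \<mu> f 2 q = 0" if "q \<in> V" for q
    using diag[of q] off_diag[of q] that unfolding V_def W_def by (auto simp: sum_power2_gt_zero_iff)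
  moreover have "continuous_on U (\<lambda>q. pd 3 (pd 3 (pp_profile H)) q / 2)"
    using smooth_on_imp_continuous_on[OF smooth_on_pd[OF smooth_on_pd[OF H]]] by (intro continuous_intros) auto
  ultimately have "scaled_pd \<mu> f 2 q = 0" if "q \<in> U" for q
    using u_ode_unique_continuation[OF assms(1,2) \<open>open V\<close> _ \<open>V \<noteq> {}\<close> _ \<psi> \<psi>_u L_u _ that]
    unfolding V_def by blast
  then show ?thesis by (simp add: scaled_pd_def)
qed

end
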